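(* Let $\mathcal{M}_1,\mathcal{M}_2$ be matroids on a finite ground set $E$. For any parameters $f,p\in(0,1)$, any arrival order and any values of the auxiliary bits, the sets $S,N_1,N_2$ produced by Marking-Greedy satisfy that $S\cup N_1\cup N_2$ is independent in both $\mathcal{M}_1$ and $\mathcal{M}_2$.
   Context: For $i\in\{1,2\}$, $\bar\imath$ denotes the other index, and $\mathrm{span}_i(T)=\{e\in E:\mathrm{rank}_{\mathcal{M}_i}(T\cup\{e\})=\mathrm{rank}_{\mathcal{M}_i}(T)\}$. Marking-Greedy with parameters $f,p$: elements of $E$ ($m=|E|$) arrive in an order $\pi$; auxiliary bits $\Psi(e)\in\{0,1\}$ are given (in the randomized algorithm, i.i.d. with $\Pr[\Psi(e)=1]=1-p$). Phase (a): start with $S=T=\emptyset$; for each of the first $fm$ arriving elements $e$, if $T\cup\{e\}$ is independent in both matroids, add $e$ to $T$, and if moreover $\Psi(e)=1$ add $e$ to $S$. Phase (b): let $T_f$ be the final $T$, set $N_1=N_2=\emptyset$; for each remaining arriving element $e$ and each $i\in\{1,2\}$: if $e\in\mathrm{span}_i(T_f)$, $e\notin\mathrm{span}_{\bar\imath}(T_f)$, $S\cup N_i\cup\{e\}$ is independent in $\mathcal{M}_i$ and $T_f\cup N_i\cup\{e\}$ is independent in $\mathcal{M}_{\bar\imath}$, then add $e$ to $N_i$. Output $S\cup N_1\cup N_2$. *)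

theory Defs
  imports Complex_Main
begin

definition matroid :: "'a set \<Rightarrow> ('a set \<Rightarrow> bool) \<Rightarrow> bool" where
  "matroid E indep \<longleftrightarrow> finite E \<and> indep {} \<and>
     (\<forall>X. indep X \<longrightarrow> X \<subseteq> E) \<and>
     (\<forall>X Y. indep X \<and> Y \<subseteq> X \<longrightarrow> indep Y) \<and>
     (\<forall>X Y. indep X \<and> indep Y \<and> card X < card Y \<longrightarrow> (\<exists>e\<in>Y - X. indep (insert e X)))"

definition mrank :: "('a set \<Rightarrow> bool) \<Rightarrow> 'a set \<Rightarrow> nat" where
  "mrank indep T = Max {card X | X. X \<subseteq> T \<and> indep X}"

definition mspan :: "'a set \<Rightarrow> ('a set \<Rightarrow> bool) \<Rightarrow> 'a set \<Rightarrow> 'a set" where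
  "mspan E indep T = {e \<in> E. mrank indep (T \<union> {e}) = mrank indep T}"

text \<open>Phase (a) step; state is (S, T). Psi e = True means the auxiliary bit is 1.\<close>
definition phase_a_step :: "('a set \<Rightarrow> bool) \<Rightarrow> ('a set \<Rightarrow> bool) \<Rightarrow> ('a \<Rightarrow> bool)
    \<Rightarrow> 'a \<Rightarrow> 'a set \<times> 'a set \<Rightarrow> 'a set \<times> 'a set" where
  "phase_a_step I1 I2 Psi e ST = (case ST of (S, T) \<Rightarrow>
     if I1 (T \<union> {e}) \<and> I2 (T \<union> {e})
     then (if Psi e then S \<union> {e} else S, T \<union> {e}) else (S, T))"

text \<open>Phase (b) update of N_i, with Ii the i-th matroid and Ij the other one.\<close>
definition add_N :: "'a set \<Rightarrow> ('a set \<Rightarrow> bool) \<Rightarrow> ('a set \<Rightarrow> bool) \<Rightarrow> 'a set \<Rightarrow> 'a set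
    \<Rightarrow> 'a \<Rightarrow> 'a set \<Rightarrow> 'a set" where
  "add_N E Ii Ij S Tf e N =
     (if e \<in> mspan E Ii Tf \<and> e \<notin> mspan E Ij Tf \<and> Ii (S \<union> N \<union> {e}) \<and> Ij (Tf \<union> N \<union> {e})
      then N \<union> {e} else N)"

definition phase_b_step :: "'a set \<Rightarrow> ('a set \<Rightarrow> bool) \<Rightarrow> ('a set \<Rightarrow> bool) \<Rightarrow> 'a set \<Rightarrow> 'a set
    \<Rightarrow> 'a \<Rightarrow> 'a set \<times> 'a set \<Rightarrow> 'a set \<times> 'a set" where
  "phase_b_step E I1 I2 S Tf e NN = (case NN of (N1, N2) \<Rightarrow>
     (let N1' = add_N E I1 I2 S Tf e N1 in (N1', add_N E I2 I1 S Tf e N2)))"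

text \<open>Marking-Greedy with parameter f (p only governs the distribution of Psi).
  The arrival order is the list ord; the first floor(f*m) elements form phase (a).
  Returns (S, N1, N2).\<close>
definition marking_greedy :: "'a set \<Rightarrow> ('a set \<Rightarrow> bool) \<Rightarrow> ('a set \<Rightarrow> bool) \<Rightarrow> real
    \<Rightarrow> 'a list \<Rightarrow> ('a \<Rightarrow> bool) \<Rightarrow> 'a set \<times> 'a set \<times> 'a set" where
  "marking_greedy E I1 I2 f ord Psi =
     (let k = nat \<lfloor>f * real (length ord)\<rfloor>;
          (S, Tf) = fold (phase_a_step I1 I2 Psi) (take k ord) ({}, {});
          (N1, N2) = fold (phase_b_step E I1 I2 S Tf) (drop k ord) ({}, {})
      in (S, N1, N2))"

end

theory Submission
  imports Defs
begin

text \<open>Phase (a) keeps \<open>S \<subseteq> T\<^sub>f\<close> with \<open>T\<^sub>f\<close> independent in both matroids, so \<open>S\<close> lies in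
  both spans of \<open>T\<^sub>f\<close>. Phase (b) keeps each \<open>N\<^sub>i\<close> inside the \<open>M\<^sub>i\<close>-span of \<open>T\<^sub>f\<close> but
  disjoint from its span in the other matroid, with \<open>S \<union> N\<^sub>i\<close> independent in \<open>M\<^sub>i\<close> and
  \<open>T\<^sub>f \<union> N\<^sub>i\<close> independent in the other one. The output is then independent in \<open>M\<^sub>1\<close> by an
  exchange argument: if \<open>A\<close> is independent inside the span of \<open>T\<close>, and \<open>T \<union> N\<close> is
  independent with \<open>N\<close> outside that span, then \<open>A \<union> N\<close> is independent. This follows from
  submodularity of the rank applied to \<open>A \<union> N\<close> and \<open>T \<union> A\<close>; take \<open>A = S \<union> N\<^sub>1\<close>,
  \<open>T = T\<^sub>f\<close>, \<open>N = N\<^sub>2\<close>, and symmetrically for \<open>M\<^sub>2\<close>.\<close>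

lemma matroid_indep_finite: "matroid E I \<Longrightarrow> I X \<Longrightarrow> finite X"
  unfolding matroid_def by (meson finite_subset)

lemma matroid_indep_subset: "matroid E I \<Longrightarrow> I X \<Longrightarrow> Y \<subseteq> X \<Longrightarrow> I Y"
  unfolding matroid_def by blast

lemma matroid_indep_subset_ground: "matroid E I \<Longrightarrow> I X \<Longrightarrow> X \<subseteq> E"
  unfolding matroid_def by blast

lemma matroid_augment:
  "matroid E I \<Longrightarrow> I X \<Longrightarrow> I Y \<Longrightarrow> card X < card Y \<Longrightarrow> \<exists>e\<in>Y - X. I (insert e X)"
  unfolding matroid_def by blast

lemma mrank_candidates_finite_nonempty:
  assumes "matroid E I"
  shows "finite {card X |X. X \<subseteq> T \<and> I X}" and "{card X |X. X \<subseteq> T \<and> I X} \<noteq> {}"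
proof -
  have "{card X |X. X \<subseteq> T \<and> I X} \<subseteq> {..card E}"
    using assms unfolding matroid_def by (auto intro: card_mono)
  then show "finite {card X |X. X \<subseteq> T \<and> I X}"
    using finite_subset by blast
  have "I {}" using assms unfolding matroid_def by blast
  then show "{card X |X. X \<subseteq> T \<and> I X} \<noteq> {}" by blast
qed

lemma card_le_mrank: "matroid E I \<Longrightarrow> X \<subseteq> T \<Longrightarrow> I X \<Longrightarrow> card X \<le> mrank I T"
  unfolding mrank_def using mrank_candidates_finite_nonempty[of E I T] by (intro Max_ge) auto

lemma mrank_obtain_indep:
  assumes "matroid E I"
  obtains X where "X \<subseteq> T" "I X" "card X = mrank I T"
proof -
  have "mrank I T \<in> {card X |X. X \<subseteq> T \<and> I X}"
    unfolding mrank_def using mrank_candidates_finite_nonempty[OF assms, of T] by (intro Max_in)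
  then have "\<exists>X. mrank I T = card X \<and> X \<subseteq> T \<and> I X" by (simp only: mem_Collect_eq)
  then show ?thesis using that by metis
qed

lemma mrank_mono:
  assumes "matroid E I" "A \<subseteq> B"
  shows "mrank I A \<le> mrank I B"
proof -
  obtain X where "X \<subseteq> A" "I X" "card X = mrank I A"
    using mrank_obtain_indep[OF assms(1)] .
  with assms show ?thesis using card_le_mrank[of E I X B] by auto
qed

lemma mrank_indep:
  assumes "matroid E I" "I X"
  shows "mrank I X = card X"
proof -
  obtain Y where "Y \<subseteq> X" "I Y" "card Y = mrank I X"
    using mrank_obtain_indep[OF assms(1)] .
  then have "mrank I X \<le> card X"
    using card_mono[OF matroid_indep_finite[OF assms]] by metis
  with card_le_mrank[OF assms(1) order_refl assms(2)] show ?thesis by simp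
qed

lemma indep_if_card_le_mrank:
  assumes "matroid E I" "finite X" "card X \<le> mrank I X"
  shows "I X"
proof -
  obtain Y where "Y \<subseteq> X" "I Y" "card Y = mrank I X"
    using mrank_obtain_indep[OF assms(1)] .
  with assms have "Y = X" by (metis card_seteq)
  with \<open>I Y\<close> show ?thesis by simp
qed

lemma indep_extend_to_max_indep:
  assumes "matroid E I" "I J" "J \<subseteq> Z"
  shows "\<exists>K. J \<subseteq> K \<and> K \<subseteq> Z \<and> I K \<and> card K = mrank I Z"
  using assms(2,3)
proof (induction "mrank I Z - card J" arbitrary: J rule: less_induct)
  case less
  show ?case
  proof (cases "card J < mrank I Z")
    case False
    with less card_le_mrank[OF assms(1), of J Z] show ?thesis by (intro exI[of _ J]) auto
  next
    case True
    obtain X where X: "X \<subseteq> Z" "I X" "card X = mrank I Z"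
      using mrank_obtain_indep[OF assms(1)] .
    with True obtain e where e: "e \<in> X - J" "I (insert e J)"
      using matroid_augment[OF assms(1) less.prems(1) X(2)] by auto
    have "card (insert e J) = Suc (card J)"
      using e matroid_indep_finite[OF assms(1) less.prems(1)] by simp
    with True have "mrank I Z - card (insert e J) < mrank I Z - card J" by simp
    moreover have "insert e J \<subseteq> Z" using e X less.prems(2) by blast
    ultimately show ?thesis using less.hyps[OF _ e(2)] by blast
  qed
qed

lemma mrank_submodular:
  assumes "matroid E I"
  shows "mrank I (X \<union> Y) + mrank I (X \<inter> Y) \<le> mrank I X + mrank I Y"
proof -
  obtain J where J: "J \<subseteq> X \<inter> Y" "I J" "card J = mrank I (X \<inter> Y)"
    using mrank_obtain_indep[OF assms] .
  obtain K where K: "J \<subseteq> K" "K \<subseteq> X \<union> Y" "I K" "card K = mrank I (X \<union> Y)"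
    using indep_extend_to_max_indep[OF assms J(2), of "X \<union> Y"] J(1) by blast
  have fK: "finite K" using matroid_indep_finite[OF assms K(3)] .
  have "card (K \<inter> X) \<le> mrank I X" "card (K \<inter> Y) \<le> mrank I Y"
    using card_le_mrank[OF assms] matroid_indep_subset[OF assms K(3)] by auto
  moreover have "card (K \<inter> X) + card (K \<inter> Y) = card K + card (K \<inter> X \<inter> Y)"
  proof -
    have "card ((K \<inter> X) \<union> (K \<inter> Y)) + card ((K \<inter> X) \<inter> (K \<inter> Y)) = card (K \<inter> X) + card (K \<inter> Y)"
      using fK by (intro card_Un_Int[symmetric]) auto
    moreover have "(K \<inter> X) \<union> (K \<inter> Y) = K" using K(2) by auto
    ultimately show ?thesis by (simp add: Int_ac)
  qed
  moreover have "card J \<le> card (K \<inter> X \<inter> Y)" using J(1) K(1) fK by (intro card_mono) auto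
  ultimately show ?thesis using J(3) K(4) by linarith
qed

lemma subset_mspan: "T \<subseteq> E \<Longrightarrow> T \<subseteq> mspan E I T"
  unfolding mspan_def by (auto simp: insert_absorb)

lemma mrank_union_subset_mspan:
  assumes "matroid E I" "A \<subseteq> mspan E I T"
  shows "mrank I (T \<union> A) = mrank I T"
proof -
  have "finite A"
    using assms finite_subset[of A E] unfolding matroid_def mspan_def by blast
  from this assms(2) show ?thesis
  proof (induction A rule: finite_induct)
    case empty
    then show ?case by simp
  next
    case (insert e A)
    have IH: "mrank I (T \<union> A) = mrank I T" using insert by auto
    have e: "mrank I (T \<union> {e}) = mrank I T" using insert(4) unfolding mspan_def by auto
    have "mrank I (T \<union> insert e A) + mrank I ((T \<union> A) \<inter> (T \<union> {e}))
        \<le> mrank I (T \<union> A) + mrank I (T \<union> {e})"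
      using mrank_submodular[OF assms(1), of "T \<union> A" "T \<union> {e}"] by (simp add: Un_ac)
    moreover have "mrank I T \<le> mrank I ((T \<union> A) \<inter> (T \<union> {e}))"
      by (rule mrank_mono[OF assms(1)]) auto
    moreover have "mrank I T \<le> mrank I (T \<union> insert e A)"
      by (rule mrank_mono[OF assms(1)]) auto
    ultimately show ?case using IH e by linarith
  qed
qed

lemma indep_union_outside_mspan:
  assumes m: "matroid E I" and A: "I A" "A \<subseteq> mspan E I T"
    and TN: "I (T \<union> N)" and N: "N \<inter> mspan E I T = {}"
  shows "I (A \<union> N)"
proof -
  have T: "I T" using matroid_indep_subset[OF m TN] by blast
  have fin: "finite T" "finite N" "finite A"
    using matroid_indep_finite[OF m TN] matroid_indep_finite[OF m A(1)] by auto
  have disj: "T \<inter> N = {}" "A \<inter> N = {}"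
    using N A(2) subset_mspan[OF matroid_indep_subset_ground[OF m T], of I] by auto
  have "mrank I (T \<union> N) \<le> mrank I ((A \<union> N) \<union> (T \<union> A))"
    by (rule mrank_mono[OF m]) auto
  moreover have "mrank I A \<le> mrank I ((A \<union> N) \<inter> (T \<union> A))"
    by (rule mrank_mono[OF m]) auto
  moreover have "mrank I (T \<union> A) = card T"
    using mrank_union_subset_mspan[OF m A(2)] mrank_indep[OF m T] by simp
  ultimately have "card (T \<union> N) + card A \<le> mrank I (A \<union> N) + card T"
    using mrank_submodular[OF m, of "A \<union> N" "T \<union> A"] mrank_indep[OF m TN] mrank_indep[OF m A(1)]
    by linarith
  then have "card (A \<union> N) \<le> mrank I (A \<union> N)"
    using fin disj by (simp add: card_Un_disjoint)
  then show ?thesis using indep_if_card_le_mrank[OF m] fin by auto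
qed

lemma fold_phase_a_step_common_indep:
  assumes "S \<subseteq> T" "I1 T" "I2 T" "fold (phase_a_step I1 I2 Psi) xs (S, T) = (S', T')"
  shows "S' \<subseteq> T' \<and> I1 T' \<and> I2 T'"
  using assms
proof (induction xs arbitrary: S T)
  case Nil
  then show ?case by simp
next
  case (Cons x xs)
  obtain S1 T1 where step: "phase_a_step I1 I2 Psi x (S, T) = (S1, T1)" by fastforce
  with Cons.prems have "S1 \<subseteq> T1" "I1 T1" "I2 T1"
    unfolding phase_a_step_def by (auto split: if_splits)
  with Cons step show ?case by simp
qed

definition phase_b_invariant ::
    "'a set \<Rightarrow> ('a set \<Rightarrow> bool) \<Rightarrow> ('a set \<Rightarrow> bool) \<Rightarrow> 'a set \<Rightarrow> 'a set \<Rightarrow> 'a set \<Rightarrow> bool" where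
  "phase_b_invariant E Ii Ij S Tf N \<longleftrightarrow>
     Ii (S \<union> N) \<and> Ij (Tf \<union> N) \<and> N \<subseteq> mspan E Ii Tf \<and> N \<inter> mspan E Ij Tf = {}"

lemma add_N_phase_b_invariant:
  "phase_b_invariant E Ii Ij S Tf N \<Longrightarrow> phase_b_invariant E Ii Ij S Tf (add_N E Ii Ij S Tf e N)"
  unfolding phase_b_invariant_def add_N_def by (auto simp: Un_assoc)

lemma fold_phase_b_step_invariant:
  assumes "phase_b_invariant E I1 I2 S Tf N1" "phase_b_invariant E I2 I1 S Tf N2"
    and "fold (phase_b_step E I1 I2 S Tf) xs (N1, N2) = (N1', N2')"
  shows "phase_b_invariant E I1 I2 S Tf N1' \<and> phase_b_invariant E I2 I1 S Tf N2'"
  using assms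
proof (induction xs arbitrary: N1 N2)
  case Nil
  then show ?case by simp
next
  case (Cons x xs)
  have "phase_b_step E I1 I2 S Tf x (N1, N2) = (add_N E I1 I2 S Tf x N1, add_N E I2 I1 S Tf x N2)"
    unfolding phase_b_step_def Let_def by simp
  with Cons.prems show ?case
    by (intro Cons.IH[of "add_N E I1 I2 S Tf x N1" "add_N E I2 I1 S Tf x N2"])
      (simp_all add: add_N_phase_b_invariant)
qed

theorem lemma6:
  fixes E :: "'a set" and I1 I2 :: "'a set \<Rightarrow> bool" and f p :: real
    and ord :: "'a list" and Psi :: "'a \<Rightarrow> bool"
  assumes "matroid E I1" and "matroid E I2"
    and "0 < f" and "f < 1" and "0 < p" and "p < 1"
    and "distinct ord" and "set ord = E"
  shows "case marking_greedy E I1 I2 f ord Psi of (S, N1, N2) \<Rightarrow>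
           I1 (S \<union> N1 \<union> N2) \<and> I2 (S \<union> N1 \<union> N2)"
proof -
  define k where "k = nat \<lfloor>f * real (length ord)\<rfloor>"
  obtain S Tf where a: "fold (phase_a_step I1 I2 Psi) (take k ord) ({}, {}) = (S, Tf)"
    by fastforce
  obtain N1 N2 where b: "fold (phase_b_step E I1 I2 S Tf) (drop k ord) ({}, {}) = (N1, N2)"
    by fastforce
  have empty_indep: "I1 {}" "I2 {}" using assms(1,2) unfolding matroid_def by auto
  have Tf: "S \<subseteq> Tf" "I1 Tf" "I2 Tf"
    using fold_phase_a_step_common_indep[OF _ empty_indep a] by auto
  then have S_span: "S \<subseteq> mspan E I1 Tf" "S \<subseteq> mspan E I2 Tf"
    using subset_mspan[OF matroid_indep_subset_ground[OF assms(1) \<open>I1 Tf\<close>], of I1]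
      subset_mspan[OF matroid_indep_subset_ground[OF assms(2) \<open>I2 Tf\<close>], of I2] by auto
  have "phase_b_invariant E I1 I2 S Tf N1 \<and> phase_b_invariant E I2 I1 S Tf N2"
    using Tf matroid_indep_subset[OF assms(1)] matroid_indep_subset[OF assms(2)]
    by (intro fold_phase_b_step_invariant[OF _ _ b]) (auto simp: phase_b_invariant_def)
  then have "I1 ((S \<union> N1) \<union> N2)" "I2 ((S \<union> N2) \<union> N1)"
    using S_span by (auto simp: phase_b_invariant_def
      intro!: indep_union_outside_mspan[OF assms(1), of _ Tf] indep_union_outside_mspan[OF assms(2), of _ Tf])
  moreover have "marking_greedy E I1 I2 f ord Psi = (S, N1, N2)"
    unfolding marking_greedy_def k_def[symmetric] using a b by simp
  ultimately show ?thesis by (simp add: Un_ac)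
qed

end
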